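(* Let $n\ge1$, $\eta>0$ with $C_1\eta<1$, and let $\{X_t\}_{0\le t\le n}$ (non-negative) and $\{U_t\}_{1\le t\le n}$ be adapted to a filtration $\{\mathcal F_t\}$ and satisfy, almost surely for $1\le t\le n$, $$X_t\le(1-C_1\eta)X_{t-1}+U_t,\quad \big|\mathbb E(U_t\mid\mathcal F_{t-1})\big|\le C_2\eta^2+\sum_{i=1}^mA_i\eta^{1+a_i}X_{t-1}^{b_i},\quad |U_t|\le C_3\eta\sqrt{X_{t-1}}+\sum_{i=1}^mB_i\eta^{1/2+c_i}X_{t-1}^{d_i},$$ with positive constants $C_1,C_2,C_3,A_i,B_i,a_i,b_i,c_i,d_i$. Let $$D:=\max_{1\le i\le m}\Big\{\frac{A_i}{C_1}\Big\}\vee\max_{1\le i\le m}\Big\{\frac{\sqrt{m+1}\,B_i}{\sqrt{C_1}}\Big\}\vee\frac{C_2}{C_1}\vee\frac{C_3\sqrt{m+1}}{\sqrt{C_1}},$$ and for $r\in(0,1)$, $\delta\in(0,1)$, $$D_\delta(r):=\frac{8D}{(1-C_1\eta)^n}\Big(\sqrt{\log(1/\delta)}\Big(\sqrt{\eta r}+\sum_{i=1}^m\eta^{c_i}r^{d_i}\Big)+\eta+\sum_{i=1}^m\eta^{a_i}r^{b_i}\Big).$$ Then for any $\varepsilon_0>0$ with $\varepsilon_0+D_\delta(r)\le r$ and any event $A\in\mathcal F_0$ with $A\subset\{X_0\le\varepsilon_0\}$ and $\mathbb P(A)>0$, $$\mathbb P\Big(\big\{\exists t\in[1,n]:\ X_t\ge(1-C_1\eta)^t(\varepsilon_0+D_\delta(r))\big\}\cap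 A\Big)\le\delta.$$ *)

theory Defs
  imports "HOL-Probability.Probability"
begin

definition Dconst ::
  "nat \<Rightarrow> real \<Rightarrow> real \<Rightarrow> real \<Rightarrow> (nat \<Rightarrow> real) \<Rightarrow> (nat \<Rightarrow> real) \<Rightarrow> real" where
  "Dconst m C1 C2 C3 A B =
     Max ({C2 / C1, C3 * sqrt (real m + 1) / sqrt C1}
          \<union> (\<lambda>i. A i / C1) ` {1..m}
          \<union> (\<lambda>i. sqrt (real m + 1) * B i / sqrt C1) ` {1..m})"

definition Ddelta ::
  "nat \<Rightarrow> nat \<Rightarrow> real \<Rightarrow> real \<Rightarrow> real \<Rightarrow> real \<Rightarrow> (nat \<Rightarrow> real) \<Rightarrow> (nat \<Rightarrow> real)
   \<Rightarrow> (nat \<Rightarrow> real) \<Rightarrow> (nat \<Rightarrow> real) \<Rightarrow> (nat \<Rightarrow> real) \<Rightarrow> (nat \<Rightarrow> real)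
   \<Rightarrow> real \<Rightarrow> real \<Rightarrow> real" where
  "Ddelta n m C1 C2 C3 \<eta> A B a b c d \<delta> r =
     8 * Dconst m C1 C2 C3 A B / (1 - C1 * \<eta>) ^ n *
     (sqrt (ln (1 / \<delta>)) * (sqrt (\<eta> * r) + (\<Sum>i=1..m. \<eta> powr c i * r powr d i))
      + \<eta> + (\<Sum>i=1..m. \<eta> powr a i * r powr b i))"

end

theory Submission
  imports Defs
begin

(*
  Write q = 1 - C1 eta, Theta = eps0 + D_delta(r), and let S and T be the two bracketed sums in
  D_delta(r), so that D_delta(r) = 8 D q^-n (sqrt(log(1/delta)) S + T).  Dividing the recursion by q^t
  gives X_t / q^t <= X_0 + sum_{s<=t} U_s / q^s.  Up to the first time tau with X_tau >= q^tau Theta the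
  process stays below Theta <= r, so up to tau the conditional drift of U_s is at most C1 eta D T and
  |U_s| is at most sqrt(C1 eta) D S.  Hence on the exit event the martingale with increments
  1{s <= tau} (U_s - E(U_s | F_{s-1})) / q^s exceeds Theta - eps0 - D T / q^n = 8 D sqrt(log(1/delta)) S / q^n
  + 7 D T / q^n, and the Azuma-Hoeffding inequality bounds the probability of this by delta^8 <= delta.
*)

section \<open>The Azuma-Hoeffding inequality\<close>

lemma cosh_le_exp_half_square:
  fixes y :: real
  shows "cosh y \<le> exp (y\<^sup>2 / 2)"
proof -
  have "cosh y \<le> exp (y\<^sup>2 / 2)" if "0 \<le> y" for y :: real
  proof -
    have "- (2 * y) * (1/2) + ln (1 + (1/2) * (exp (2 * y) - 1)) \<le> (2 * y)\<^sup>2 / 8"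
      using Hoeffdings_lemma_aux[of "2 * y" "1/2"] that by simp
    moreover have "1 + (1/2) * (exp (2 * y) - 1) = exp y * cosh y"
      by (simp add: cosh_def exp_minus field_simps flip: exp_add)
    ultimately have "ln (cosh y) \<le> y\<^sup>2 / 2"
      by (simp add: ln_mult power2_eq_square)
    then show ?thesis
      by (metis cosh_real_pos exp_le_cancel_iff exp_ln)
  qed
  from this[of y] this[of "- y"] show ?thesis
    by (cases "0 \<le> y") auto
qed

lemma exp_le_cosh_sinh_chord:
  fixes x c \<theta> :: real
  assumes "\<bar>x\<bar> \<le> c" "0 \<le> \<theta>"
  shows "exp (\<theta> * x) \<le> cosh (\<theta> * c) + sinh (\<theta> * c) / c * x"
proof (cases "c = 0")
  case False
  then have "0 < c" using assms(1) by linarith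
  define l where "l = (c - x) / (2 * c)"
  have "0 \<le> l" "l \<le> 1" "x = (1 - l) * c + l * (- c)"
    using assms \<open>0 < c\<close> by (auto simp: l_def field_simps)
  then have "exp (\<theta> * x) \<le> (1 - l) * exp (\<theta> * c) + l * exp (\<theta> * (- c))"
    using convex_onD[OF convex_on_exp[OF assms(2)], of l c "- c"] by simp
  also have "\<dots> = cosh (\<theta> * c) + sinh (\<theta> * c) / c * x"
    using \<open>0 < c\<close> by (simp add: l_def cosh_def sinh_def field_simps)
  finally show ?thesis .
qed (use assms in simp)

text \<open>Hoeffding's lemma, conditioned on \<open>G\<close> and integrated against a nonnegative
  \<open>G\<close>-measurable weight.\<close>

lemma (in prob_space) integral_mult_exp_cond_increment_le:
  fixes Y V :: "'a \<Rightarrow> real"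
  assumes G: "sigma_finite_subalgebra M G"
    and Y: "Y \<in> borel_measurable G" "integrable M Y" "AE x in M. 0 \<le> Y x"
    and V: "V \<in> borel_measurable M" "AE x in M. \<bar>V x\<bar> \<le> c"
    and "0 \<le> \<theta>"
  defines "D \<equiv> \<lambda>x. V x - real_cond_exp M G V x"
  shows "integrable M (\<lambda>x. Y x * exp (\<theta> * D x))"
    and "(\<integral>x. Y x * exp (\<theta> * D x) \<partial>M) \<le> exp (\<theta>\<^sup>2 / 2 * (2 * c)\<^sup>2) * (\<integral>x. Y x \<partial>M)"
proof -
  interpret G: sigma_finite_subalgebra M G by (fact G)
  have [measurable]: "Y \<in> borel_measurable M"
    using Y(2) by auto
  have V_int: "integrable M V"
    using V by (intro integrable_const_bound[of V c]) auto
  have "AE x in M. real_cond_exp M G V x \<le> c"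
    by (rule G.real_cond_exp_le_c[OF V_int]) (use V(2) in \<open>auto elim: eventually_mono\<close>)
  moreover have "AE x in M. - c \<le> real_cond_exp M G V x"
    by (rule G.real_cond_exp_ge_c[OF V_int]) (use V(2) in \<open>auto elim: eventually_mono\<close>)
  ultimately have D_bound: "AE x in M. \<bar>D x\<bar> \<le> 2 * c"
    using V(2) by eventually_elim (auto simp: D_def)
  have D_meas [measurable]: "D \<in> borel_measurable M"
    unfolding D_def using V(1) by measurable
  have Y_mult_int: "integrable M (\<lambda>x. Y x * f x)"
    if "f \<in> borel_measurable M" "AE x in M. \<bar>f x\<bar> \<le> K" for f K
  proof (rule Bochner_Integration.integrable_bound[OF integrable_mult_right[OF Y(2), of K]])
    show "AE x in M. norm (Y x * f x) \<le> norm (K * Y x)"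
      using Y(3) that(2) by eventually_elim (auto simp: abs_mult mult.commute[of K] intro: mult_left_mono)
  qed (use that(1) in measurable)
  have YD_int: "integrable M (\<lambda>x. Y x * D x)"
    using Y_mult_int[OF D_meas D_bound] .
  show YexpD_int: "integrable M (\<lambda>x. Y x * exp (\<theta> * D x))"
    by (rule Y_mult_int[of _ "exp (\<theta> * (2 * c))"])
       (use D_bound \<open>0 \<le> \<theta>\<close> in \<open>auto elim!: eventually_mono intro!: mult_left_mono\<close>)
  have YV_int: "integrable M (\<lambda>x. Y x * V x)"
    using Y_mult_int[OF V] .
  have "(\<integral>x. Y x * D x \<partial>M) = 0"
    using G.real_cond_exp_intg(2)[OF YV_int Y(1) V(1)] YV_int
      G.real_cond_exp_intg(1)[OF YV_int Y(1) V(1)]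
    by (simp add: D_def right_diff_distrib)
  define a where "a = cosh (\<theta> * (2 * c))"
  define b where "b = sinh (\<theta> * (2 * c)) / (2 * c)"
  have "(\<integral>x. Y x * exp (\<theta> * D x) \<partial>M) \<le> (\<integral>x. a * Y x + b * (Y x * D x) \<partial>M)"
  proof (rule integral_mono_AE[OF YexpD_int])
    show "integrable M (\<lambda>x. a * Y x + b * (Y x * D x))"
      using Y(2) YD_int by auto
    show "AE x in M. Y x * exp (\<theta> * D x) \<le> a * Y x + b * (Y x * D x)"
      using Y(3) D_bound
    proof eventually_elim
      case (elim x)
      then have "Y x * exp (\<theta> * D x) \<le> Y x * (a + b * D x)"
        unfolding a_def b_def
        by (intro mult_left_mono exp_le_cosh_sinh_chord) (use \<open>0 \<le> \<theta>\<close> in auto)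
      then show ?case by (simp add: algebra_simps)
    qed
  qed
  also have "\<dots> = a * (\<integral>x. Y x \<partial>M)"
    using Y(2) YD_int \<open>(\<integral>x. Y x * D x \<partial>M) = 0\<close> by simp
  also have "\<dots> \<le> exp (\<theta>\<^sup>2 / 2 * (2 * c)\<^sup>2) * (\<integral>x. Y x \<partial>M)"
    using cosh_le_exp_half_square[of "\<theta> * (2 * c)"] integral_nonneg_AE[OF Y(3)]
    by (intro mult_right_mono) (auto simp: a_def power_mult_distrib)
  finally show "(\<integral>x. Y x * exp (\<theta> * D x) \<partial>M) \<le> exp (\<theta>\<^sup>2 / 2 * (2 * c)\<^sup>2) * (\<integral>x. Y x \<partial>M)" .
qed

locale filtered_prob_space = prob_space M for M :: "'a measure" +
  fixes F :: "nat \<Rightarrow> 'a measure"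
  assumes subalgebra_F: "\<And>t. subalgebra M (F t)"
    and sets_F_mono: "\<And>s t. s \<le> t \<Longrightarrow> sets (F s) \<subseteq> sets (F t)"
begin

lemma sigma_finite_subalgebra_F: "sigma_finite_subalgebra M (F t)"
  by (intro finite_measure_subalgebra_is_sigma_finite) (unfold_locales, rule subalgebra_F)

lemma space_F [simp]: "space (F t) = space M"
  using subalgebra_F[of t] by (simp add: subalgebra_def)

lemma measurable_F_imp_M: "f \<in> borel_measurable (F t) \<Longrightarrow> f \<in> borel_measurable M"
  using measurable_from_subalg[OF subalgebra_F] .

lemma measurable_F_mono:
  assumes "f \<in> borel_measurable (F s)" "s \<le> t"
  shows "f \<in> borel_measurable (F t)"
proof -
  have "subalgebra (F t) (F s)"
    using subalgebra_F[of s] subalgebra_F[of t] sets_F_mono[OF assms(2)]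
    unfolding subalgebra_def by auto
  then show ?thesis
    using measurable_from_subalg assms(1) by blast
qed

lemma azuma_hoeffding_mgf:
  fixes V :: "nat \<Rightarrow> 'a \<Rightarrow> real" and c :: "nat \<Rightarrow> real"
  assumes adapted: "\<And>s. s \<in> {1..n} \<Longrightarrow> V s \<in> borel_measurable (F s)"
    and bounded: "\<And>s. s \<in> {1..n} \<Longrightarrow> AE x in M. \<bar>V s x\<bar> \<le> c s"
    and "0 \<le> \<theta>"
  defines "Z \<equiv> \<lambda>x. \<Sum>s=1..n. V s x - real_cond_exp M (F (s - 1)) (V s) x"
  shows "integrable M (\<lambda>x. exp (\<theta> * Z x))"
    and "(\<integral>x. exp (\<theta> * Z x) \<partial>M) \<le> exp (\<theta>\<^sup>2 / 2 * (\<Sum>s=1..n. (2 * c s)\<^sup>2))"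
proof -
  define Z' where "Z' t x = (\<Sum>s=1..t. V s x - real_cond_exp M (F (s - 1)) (V s) x)" for t x
  have "integrable M (\<lambda>x. exp (\<theta> * Z' t x)) \<and>
      (\<integral>x. exp (\<theta> * Z' t x) \<partial>M) \<le> exp (\<theta>\<^sup>2 / 2 * (\<Sum>s=1..t. (2 * c s)\<^sup>2))"
    if "t \<le> n" for t
    using that
  proof (induction t)
    case 0
    then show ?case by (simp add: Z'_def)
  next
    case (Suc t)
    then have IH: "integrable M (\<lambda>x. exp (\<theta> * Z' t x))"
      "(\<integral>x. exp (\<theta> * Z' t x) \<partial>M) \<le> exp (\<theta>\<^sup>2 / 2 * (\<Sum>s=1..t. (2 * c s)\<^sup>2))"
      by auto
    have Suc_t: "Suc t \<in> {1..n}"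
      using Suc.prems by simp
    have "Z' t \<in> borel_measurable (F t)"
      unfolding Z'_def
    proof (intro borel_measurable_sum borel_measurable_diff)
      fix s assume "s \<in> {1..t}"
      then show "V s \<in> borel_measurable (F t)" "real_cond_exp M (F (s - 1)) (V s) \<in> borel_measurable (F t)"
        using Suc.prems measurable_F_mono[OF adapted]
          measurable_F_mono[OF borel_measurable_cond_exp]
        by auto
    qed
    then have Y_meas: "(\<lambda>x. exp (\<theta> * Z' t x)) \<in> borel_measurable (F t)"
      by measurable
    have "exp (\<theta> * Z' (Suc t) x) =
        exp (\<theta> * Z' t x) * exp (\<theta> * (V (Suc t) x - real_cond_exp M (F t) (V (Suc t)) x))" for x
      by (simp add: Z'_def distrib_left exp_add)
    moreover note integral_mult_exp_cond_increment_le[OF sigma_finite_subalgebra_F Y_meas IH(1) _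
        measurable_F_imp_M[OF adapted[OF Suc_t]] bounded[OF Suc_t] \<open>0 \<le> \<theta>\<close>]
    ultimately have "integrable M (\<lambda>x. exp (\<theta> * Z' (Suc t) x))"
      "(\<integral>x. exp (\<theta> * Z' (Suc t) x) \<partial>M) \<le> exp (\<theta>\<^sup>2 / 2 * (2 * c (Suc t))\<^sup>2) * (\<integral>x. exp (\<theta> * Z' t x) \<partial>M)"
      by simp_all
    moreover have "\<dots> \<le> exp (\<theta>\<^sup>2 / 2 * (2 * c (Suc t))\<^sup>2) * exp (\<theta>\<^sup>2 / 2 * (\<Sum>s=1..t. (2 * c s)\<^sup>2))"
      using IH(2) by simp
    ultimately show ?case
      by (simp add: algebra_simps flip: exp_add)
  qed
  from this[of n] show "integrable M (\<lambda>x. exp (\<theta> * Z x))"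
    and "(\<integral>x. exp (\<theta> * Z x) \<partial>M) \<le> exp (\<theta>\<^sup>2 / 2 * (\<Sum>s=1..n. (2 * c s)\<^sup>2))"
    by (simp_all add: Z_def Z'_def)
qed

lemma azuma_hoeffding_tail:
  fixes V :: "nat \<Rightarrow> 'a \<Rightarrow> real" and c :: "nat \<Rightarrow> real"
  assumes adapted: "\<And>s. s \<in> {1..n} \<Longrightarrow> V s \<in> borel_measurable (F s)"
    and bounded: "\<And>s. s \<in> {1..n} \<Longrightarrow> AE x in M. \<bar>V s x\<bar> \<le> c s"
    and "0 \<le> t"
  shows "prob {x \<in> space M. t \<le> (\<Sum>s=1..n. V s x - real_cond_exp M (F (s - 1)) (V s) x)}
           \<le> exp (- t\<^sup>2 / (2 * (\<Sum>s=1..n. (2 * c s)\<^sup>2)))"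
proof -
  define Z where "Z x = (\<Sum>s=1..n. V s x - real_cond_exp M (F (s - 1)) (V s) x)" for x
  define \<sigma>2 where "\<sigma>2 = (\<Sum>s=1..n. (2 * c s)\<^sup>2)"
  define \<theta> where "\<theta> = t / \<sigma>2"
  have "0 \<le> \<theta>"
    using \<open>0 \<le> t\<close> by (simp add: \<theta>_def \<sigma>2_def sum_nonneg)
  note mgf = azuma_hoeffding_mgf[where n = n, OF adapted bounded \<open>0 \<le> \<theta>\<close>, folded Z_def]
  have [measurable]: "Z \<in> borel_measurable M"
    unfolding Z_def using measurable_F_imp_M[OF adapted] by measurable
  have "prob {x \<in> space M. t \<le> Z x} \<le> prob {x \<in> space M. exp (\<theta> * t) \<le> exp (\<theta> * Z x)}"
    using \<open>0 \<le> \<theta>\<close> by (intro finite_measure_mono) (auto intro: mult_left_mono)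
  also have "\<dots> \<le> (\<integral>x. exp (\<theta> * Z x) \<partial>M) / exp (\<theta> * t)"
    using mgf(1) by (intro integral_Markov_inequality_measure) auto
  also have "\<dots> \<le> exp (\<theta>\<^sup>2 / 2 * \<sigma>2) / exp (\<theta> * t)"
    using mgf(2) by (simp add: \<sigma>2_def divide_right_mono)
  also have "\<dots> = exp (- t\<^sup>2 / (2 * \<sigma>2))"
    \<comment> \<open>also when \<open>\<sigma>2 = 0\<close>: then \<open>\<theta> = t / 0 = 0\<close> and both sides are \<open>1\<close>\<close>
    by (cases "\<sigma>2 = 0") (simp_all add: \<theta>_def power2_eq_square field_simps flip: exp_diff)
  finally show ?thesis
    by (simp add: Z_def \<sigma>2_def)
qed

end

section \<open>First exit of a contracting recursion\<close>

lemma rescaled_recursion_telescope: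
  fixes x u :: "nat \<Rightarrow> real"
  assumes "0 < q" and rec: "\<And>t. t \<in> {1..n} \<Longrightarrow> x t \<le> q * x (t - 1) + u t" and "t \<le> n"
  shows "x t / q ^ t \<le> x 0 + (\<Sum>s=1..t. u s / q ^ s)"
  using \<open>t \<le> n\<close>
proof (induction t)
  case (Suc t)
  have "x (Suc t) / q ^ Suc t \<le> (q * x t + u (Suc t)) / q ^ Suc t"
    using rec[of "Suc t"] Suc.prems \<open>0 < q\<close> by (simp add: divide_right_mono)
  also have "\<dots> = x t / q ^ t + u (Suc t) / q ^ Suc t"
    using \<open>0 < q\<close> by (simp add: field_simps)
  also have "\<dots> \<le> x 0 + (\<Sum>s=1..Suc t. u s / q ^ s)"
    using Suc by simp
  finally show ?case .
qed simp

lemma sum_inverse_powers_le: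
  fixes q :: real
  assumes "0 < q" "q < 1"
  shows "(\<Sum>s=1..t. 1 / q ^ s) \<le> 1 / (q ^ t * (1 - q))"
proof (induction t)
  case (Suc t)
  then have "(\<Sum>s=1..Suc t. 1 / q ^ s) \<le> 1 / (q ^ t * (1 - q)) + 1 / q ^ Suc t"
    by simp
  also have "\<dots> = 1 / (q ^ Suc t * (1 - q))"
    using assms by (simp add: field_simps)
  finally show ?case .
qed (use assms in simp)

lemma sum_square_inverse_powers_le:
  fixes q :: real
  assumes "0 < q" "q < 1"
  shows "(\<Sum>s=1..n. (1 / q ^ s)\<^sup>2) \<le> 1 / ((1 - q) * (q ^ n)\<^sup>2)"
proof -
  have "(\<Sum>s=1..n. (1 / q ^ s)\<^sup>2) \<le> (\<Sum>s=1..n. 1 / q ^ n * (1 / q ^ s))"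
    using assms
    by (intro sum_mono) (auto simp: power2_eq_square intro!: mult_right_mono divide_left_mono power_decreasing)
  also have "\<dots> \<le> 1 / q ^ n * (1 / (q ^ n * (1 - q)))"
    unfolding sum_distrib_left[symmetric] using assms
    by (intro mult_left_mono sum_inverse_powers_le) auto
  finally show ?thesis
    by (simp add: power2_eq_square mult_ac)
qed

lemma first_exit_time:
  fixes x b :: "nat \<Rightarrow> real"
  assumes "x 0 < b 0" "b t \<le> x t"
  obtains \<tau> where "0 < \<tau>" "\<tau> \<le> t" "b \<tau> \<le> x \<tau>" "\<And>s. (\<forall>j<s. x j < b j) \<longleftrightarrow> s \<le> \<tau>"
proof
  define \<tau> where "\<tau> = (LEAST s. b s \<le> x s)"
  show "b \<tau> \<le> x \<tau>"
    unfolding \<tau>_def by (rule LeastI) (fact assms(2))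
  show "\<tau> \<le> t"
    unfolding \<tau>_def by (rule Least_le) (fact assms(2))
  show "0 < \<tau>"
    using \<open>b \<tau> \<le> x \<tau>\<close> assms(1) by (cases \<tau>) auto
  have before_exit: "x j < b j" if "j < \<tau>" for j
    using not_less_Least[OF that[unfolded \<tau>_def]] by simp
  show "(\<forall>j<s. x j < b j) \<longleftrightarrow> s \<le> \<tau>" for s
  proof
    assume running: "\<forall>j<s. x j < b j"
    show "s \<le> \<tau>"
    proof (rule ccontr)
      assume "\<not> s \<le> \<tau>"
      with running have "x \<tau> < b \<tau>"
        by simp
      with \<open>b \<tau> \<le> x \<tau>\<close> show False
        by simp
    qed
  qed (use before_exit in auto)
qed

lemma first_exit_stopped_sum_ge:
  fixes x u w :: "nat \<Rightarrow> real"
  assumes q: "0 < q" "q < 1" and "0 \<le> \<beta>" "x 0 \<le> \<epsilon>" "\<epsilon> < \<Theta>"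
    and rec: "\<And>t. t \<in> {1..n} \<Longrightarrow> x t \<le> q * x (t - 1) + u t"
    and drift: "\<And>s. s \<in> {1..n} \<Longrightarrow> \<forall>j<s. x j < q ^ j * \<Theta> \<Longrightarrow> w s \<le> \<beta>"
    and exit: "t \<in> {1..n}" "q ^ t * \<Theta> \<le> x t"
  shows "\<Theta> - \<epsilon> - \<beta> / (q ^ n * (1 - q))
           \<le> (\<Sum>s=1..n. if \<forall>j<s. x j < q ^ j * \<Theta> then (u s - w s) / q ^ s else 0)"
proof -
  have "x 0 < q ^ 0 * \<Theta>"
    using assms(4,5) by simp
  then obtain \<tau> where "0 < \<tau>" "\<tau> \<le> t" "q ^ \<tau> * \<Theta> \<le> x \<tau>"
    and running_iff: "\<And>s. (\<forall>j<s. x j < q ^ j * \<Theta>) \<longleftrightarrow> s \<le> \<tau>"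
    using exit(2) by (rule first_exit_time) blast
  with exit(1) have \<tau>: "0 < \<tau>" "\<tau> \<le> n" "q ^ \<tau> * \<Theta> \<le> x \<tau>"
    by auto
  have "\<Theta> \<le> x \<tau> / q ^ \<tau>"
    using \<tau>(3) q by (simp add: pos_le_divide_eq mult.commute)
  also have "\<dots> \<le> \<epsilon> + (\<Sum>s=1..\<tau>. u s / q ^ s)"
    using rescaled_recursion_telescope[where x = x and u = u, OF q(1) rec \<tau>(2)] \<open>x 0 \<le> \<epsilon>\<close> by simp
  finally have u_sum: "\<Theta> - \<epsilon> \<le> (\<Sum>s=1..\<tau>. u s / q ^ s)"
    by simp
  have "(\<Sum>s=1..\<tau>. w s / q ^ s) \<le> (\<Sum>s=1..\<tau>. \<beta> * (1 / q ^ s))"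
    using drift running_iff \<tau>(2) q by (intro sum_mono) (simp add: divide_right_mono)
  also have "\<dots> \<le> \<beta> * (1 / (q ^ \<tau> * (1 - q)))"
    unfolding sum_distrib_left[symmetric]
    by (intro mult_left_mono sum_inverse_powers_le q \<open>0 \<le> \<beta>\<close>)
  also have "\<dots> \<le> \<beta> * (1 / (q ^ n * (1 - q)))"
    using q \<tau>(2) \<open>0 \<le> \<beta>\<close>
    by (intro mult_left_mono divide_left_mono mult_right_mono power_decreasing) auto
  finally have w_sum: "(\<Sum>s=1..\<tau>. w s / q ^ s) \<le> \<beta> / (q ^ n * (1 - q))"
    by simp
  have "(\<Sum>s=1..n. if \<forall>j<s. x j < q ^ j * \<Theta> then (u s - w s) / q ^ s else 0)
      = (\<Sum>s\<in>{1..n} \<inter> {..\<tau>}. (u s - w s) / q ^ s)"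
    unfolding running_iff sum.inter_restrict[OF finite_atLeastAtMost] by (simp add: atMost_def)
  also have "{1..n} \<inter> {..\<tau>} = {1..\<tau>}"
    using \<tau>(2) by auto
  finally show ?thesis
    using u_sum w_sum by (simp add: diff_divide_distrib sum_subtractf)
qed

lemma (in sigma_finite_subalgebra) real_cond_exp_indicator_mult:
  assumes "A \<in> sets F" "integrable M f"
  shows "AE x in M. real_cond_exp M F (\<lambda>x. indicator A x * f x) x = indicator A x * real_cond_exp M F f x"
proof (rule real_cond_exp_mult)
  have "A \<in> sets M"
    using assms(1) subalg by (auto simp: subalgebra_def)
  then show "integrable M (\<lambda>x. indicator A x * f x)"
    using integrable_mult_indicator[OF _ assms(2)] by simp
qed (use assms in auto)

locale contracting_recursion = filtered_prob_space M F for M :: "'a measure" and F +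
  fixes X U :: "nat \<Rightarrow> 'a \<Rightarrow> real" and n :: nat and q \<Theta> \<beta> \<kappa> :: real
  assumes contraction: "0 < q" "q < 1"
    and \<Theta>_nonneg: "0 \<le> \<Theta>" and \<beta>_nonneg: "0 \<le> \<beta>" and \<kappa>_pos: "0 < \<kappa>"
    and X_adapted: "\<And>k. k \<le> n \<Longrightarrow> X k \<in> borel_measurable (F k)"
    and U_adapted: "\<And>s. s \<in> {1..n} \<Longrightarrow> U s \<in> borel_measurable (F s)"
    and U_int: "\<And>s. s \<in> {1..n} \<Longrightarrow> integrable M (U s)"
    and recursion: "\<And>s. s \<in> {1..n} \<Longrightarrow> AE \<omega> in M. X s \<omega> \<le> q * X (s - 1) \<omega> + U s \<omega>"
    and drift: "\<And>s. s \<in> {1..n} \<Longrightarrow>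
      AE \<omega> in M. X (s - 1) \<omega> \<le> \<Theta> \<longrightarrow> real_cond_exp M (F (s - 1)) (U s) \<omega> \<le> \<beta>"
    and increment_bounded: "\<And>s. s \<in> {1..n} \<Longrightarrow>
      AE \<omega> in M. X (s - 1) \<omega> \<le> \<Theta> \<longrightarrow> \<bar>U s \<omega>\<bar> \<le> \<kappa>"
begin

definition running :: "nat \<Rightarrow> 'a set" where
  "running s = {\<omega> \<in> space M. \<forall>j<s. X j \<omega> < q ^ j * \<Theta>}"

definition stopped_increment :: "nat \<Rightarrow> 'a \<Rightarrow> real" where
  "stopped_increment s \<omega> = indicator (running s) \<omega> * (U s \<omega> / q ^ s)"

lemma below_barrier_le_\<Theta>: "x < q ^ j * \<Theta> \<Longrightarrow> x \<le> \<Theta>"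
  using contraction \<Theta>_nonneg mult_left_le_one_le[of \<Theta> "q ^ j"] power_le_one[of q j] by simp

lemma sets_running: "s \<in> {1..n} \<Longrightarrow> running s \<in> sets (F (s - 1))"
proof -
  assume s: "s \<in> {1..n}"
  have "running s = {\<omega> \<in> space (F (s - 1)). \<forall>j\<in>{..<s}. X j \<omega> < q ^ j * \<Theta>}"
    by (auto simp: running_def)
  also have "\<dots> \<in> sets (F (s - 1))"
  proof (rule sets.sets_Collect_finite_All)
    fix j assume "j \<in> {..<s}"
    then have [measurable]: "X j \<in> borel_measurable (F (s - 1))"
      using s by (intro measurable_F_mono[OF X_adapted]) auto
    show "{\<omega> \<in> space (F (s - 1)). X j \<omega> < q ^ j * \<Theta>} \<in> sets (F (s - 1))"
      by measurable
  qed simp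
  finally show ?thesis .
qed

lemma stopped_increment_adapted: "s \<in> {1..n} \<Longrightarrow> stopped_increment s \<in> borel_measurable (F s)"
proof -
  assume s: "s \<in> {1..n}"
  have [measurable]: "running s \<in> sets (F s)" "U s \<in> borel_measurable (F s)"
    using sets_running[OF s] sets_F_mono[of "s - 1" s] U_adapted[OF s] by auto
  show ?thesis
    unfolding stopped_increment_def by measurable
qed

lemma stopped_increment_bounded:
  assumes "s \<in> {1..n}"
  shows "AE \<omega> in M. \<bar>stopped_increment s \<omega>\<bar> \<le> \<kappa> / q ^ s"
  using increment_bounded[OF assms]
proof eventually_elim
  case (elim \<omega>)
  have "X (s - 1) \<omega> \<le> \<Theta>" if "\<omega> \<in> running s"
  proof (rule below_barrier_le_\<Theta>)
    show "X (s - 1) \<omega> < q ^ (s - 1) * \<Theta>"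
      using that assms by (auto simp: running_def)
  qed
  then show ?case
    using elim contraction \<kappa>_pos
    by (auto simp: stopped_increment_def abs_mult divide_right_mono split: split_indicator)
qed

lemma cond_exp_stopped_increment:
  assumes "s \<in> {1..n}"
  shows "AE \<omega> in M. real_cond_exp M (F (s - 1)) (stopped_increment s) \<omega> =
           indicator (running s) \<omega> * (real_cond_exp M (F (s - 1)) (U s) \<omega> / q ^ s)"
proof -
  interpret sigma_finite_subalgebra M "F (s - 1)"
    by (fact sigma_finite_subalgebra_F)
  have "AE \<omega> in M. real_cond_exp M (F (s - 1)) (stopped_increment s) \<omega> =
      indicator (running s) \<omega> * real_cond_exp M (F (s - 1)) (\<lambda>\<omega>. U s \<omega> / q ^ s) \<omega>"
    unfolding stopped_increment_def using sets_running[OF assms] U_int[OF assms]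
    by (intro real_cond_exp_indicator_mult) auto
  moreover have "AE \<omega> in M. real_cond_exp M (F (s - 1)) (\<lambda>\<omega>. U s \<omega> / q ^ s) \<omega> =
      real_cond_exp M (F (s - 1)) (U s) \<omega> / q ^ s"
    using U_int[OF assms] by (rule real_cond_exp_cdiv)
  ultimately show ?thesis
    by eventually_elim simp
qed

lemma exit_imp_stopped_sum_ge:
  assumes "\<epsilon> < \<Theta>"
  shows "AE \<omega> in M. X 0 \<omega> \<le> \<epsilon> \<longrightarrow> (\<exists>s\<in>{1..n}. q ^ s * \<Theta> \<le> X s \<omega>) \<longrightarrow>
           \<Theta> - \<epsilon> - \<beta> / (q ^ n * (1 - q)) \<le>
           (\<Sum>s=1..n. stopped_increment s \<omega> - real_cond_exp M (F (s - 1)) (stopped_increment s) \<omega>)"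
proof -
  have "AE \<omega> in M. \<forall>s\<in>{1..n}. X s \<omega> \<le> q * X (s - 1) \<omega> + U s \<omega> \<and>
      (X (s - 1) \<omega> \<le> \<Theta> \<longrightarrow> real_cond_exp M (F (s - 1)) (U s) \<omega> \<le> \<beta>) \<and>
      real_cond_exp M (F (s - 1)) (stopped_increment s) \<omega> =
        indicator (running s) \<omega> * (real_cond_exp M (F (s - 1)) (U s) \<omega> / q ^ s)"
    by (intro AE_finite_allI eventually_conj recursion drift cond_exp_stopped_increment) auto
  with AE_space show ?thesis
  proof (eventually_elim, intro impI)
    case (elim \<omega>)
    assume "X 0 \<omega> \<le> \<epsilon>" and "\<exists>s\<in>{1..n}. q ^ s * \<Theta> \<le> X s \<omega>"
    then obtain t where t: "t \<in> {1..n}" "q ^ t * \<Theta> \<le> X t \<omega>"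
      by blast
    define CE where "CE s = real_cond_exp M (F (s - 1)) (U s) \<omega>" for s
    have "CE s \<le> \<beta>" if "s \<in> {1..n}" "\<forall>j<s. X j \<omega> < q ^ j * \<Theta>" for s
      using elim(2) that below_barrier_le_\<Theta>[of "X (s - 1) \<omega>" "s - 1"] by (auto simp: CE_def)
    with \<open>X 0 \<omega> \<le> \<epsilon>\<close> have "\<Theta> - \<epsilon> - \<beta> / (q ^ n * (1 - q))
        \<le> (\<Sum>s=1..n. if \<forall>j<s. X j \<omega> < q ^ j * \<Theta> then (U s \<omega> - CE s) / q ^ s else 0)"
      using first_exit_stopped_sum_ge[where x = "\<lambda>j. X j \<omega>" and u = "\<lambda>s. U s \<omega>" and w = CE,
          OF contraction \<beta>_nonneg _ assms _ _ t] elim(2)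
      by blast
    also have "\<dots> = (\<Sum>s=1..n. stopped_increment s \<omega> - real_cond_exp M (F (s - 1)) (stopped_increment s) \<omega>)"
      using elim by (intro sum.cong) (auto simp: stopped_increment_def running_def CE_def diff_divide_distrib)
    finally show "\<Theta> - \<epsilon> - \<beta> / (q ^ n * (1 - q)) \<le>
        (\<Sum>s=1..n. stopped_increment s \<omega> - real_cond_exp M (F (s - 1)) (stopped_increment s) \<omega>)" .
  qed
qed

lemma stopped_increment_variance_le:
  "(\<Sum>s=1..n. (2 * (\<kappa> / q ^ s))\<^sup>2) \<le> 4 * \<kappa>\<^sup>2 / ((1 - q) * (q ^ n)\<^sup>2)"
proof -
  have "(\<Sum>s=1..n. (2 * (\<kappa> / q ^ s))\<^sup>2) = 4 * \<kappa>\<^sup>2 * (\<Sum>s=1..n. (1 / q ^ s)\<^sup>2)"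
    by (simp add: sum_distrib_left power_mult_distrib power_divide)
  also have "\<dots> \<le> 4 * \<kappa>\<^sup>2 * (1 / ((1 - q) * (q ^ n)\<^sup>2))"
    using sum_square_inverse_powers_le[OF contraction] by (intro mult_left_mono) auto
  finally show ?thesis
    by simp
qed

lemma exit_prob_le:
  assumes "1 \<le> n" "\<epsilon> < \<Theta>" "0 \<le> t" "t \<le> \<Theta> - \<epsilon> - \<beta> / (q ^ n * (1 - q))"
    and "E \<subseteq> {\<omega> \<in> space M. X 0 \<omega> \<le> \<epsilon>}"
  shows "prob ({\<omega> \<in> space M. \<exists>s\<in>{1..n}. q ^ s * \<Theta> \<le> X s \<omega>} \<inter> E)
           \<le> exp (- (1 - q) * (q ^ n * t)\<^sup>2 / (8 * \<kappa>\<^sup>2))"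
proof -
  define Z where
    "Z \<omega> = (\<Sum>s=1..n. stopped_increment s \<omega> - real_cond_exp M (F (s - 1)) (stopped_increment s) \<omega>)"
    for \<omega>
  have "prob ({\<omega> \<in> space M. \<exists>s\<in>{1..n}. q ^ s * \<Theta> \<le> X s \<omega>} \<inter> E)
      \<le> prob {\<omega> \<in> space M. t \<le> Z \<omega>}"
  proof (rule finite_measure_mono_AE)
    show "AE \<omega> in M. \<omega> \<in> {\<omega> \<in> space M. \<exists>s\<in>{1..n}. q ^ s * \<Theta> \<le> X s \<omega>} \<inter> E \<longrightarrow>
        \<omega> \<in> {\<omega> \<in> space M. t \<le> Z \<omega>}"
      using exit_imp_stopped_sum_ge[OF assms(2)]
      by eventually_elim (use assms(4,5) in \<open>fastforce simp: Z_def\<close>)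
    have "stopped_increment s \<in> borel_measurable M" if "s \<in> {1..n}" for s
      using measurable_F_imp_M[OF stopped_increment_adapted[OF that]] .
    then show "{\<omega> \<in> space M. t \<le> Z \<omega>} \<in> sets M"
      unfolding Z_def by measurable
  qed
  also have "\<dots> \<le> exp (- t\<^sup>2 / (2 * (\<Sum>s=1..n. (2 * (\<kappa> / q ^ s))\<^sup>2)))"
    unfolding Z_def
    by (rule azuma_hoeffding_tail[OF stopped_increment_adapted stopped_increment_bounded \<open>0 \<le> t\<close>])
  also have "\<dots> \<le> exp (- (1 - q) * (q ^ n * t)\<^sup>2 / (8 * \<kappa>\<^sup>2))"
  proof -
    have "0 < (\<Sum>s=1..n. (2 * (\<kappa> / q ^ s))\<^sup>2)"
      using \<open>1 \<le> n\<close> contraction \<kappa>_pos by (intro sum_pos) auto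
    then have "t\<^sup>2 / (2 * (4 * \<kappa>\<^sup>2 / ((1 - q) * (q ^ n)\<^sup>2))) \<le> t\<^sup>2 / (2 * (\<Sum>s=1..n. (2 * (\<kappa> / q ^ s))\<^sup>2))"
      using stopped_increment_variance_le contraction \<kappa>_pos by (intro divide_left_mono) auto
    moreover have "t\<^sup>2 / (2 * (4 * \<kappa>\<^sup>2 / ((1 - q) * (q ^ n)\<^sup>2))) = (1 - q) * (q ^ n * t)\<^sup>2 / (8 * \<kappa>\<^sup>2)"
      by (simp add: power_mult_distrib mult_ac)
    ultimately show ?thesis
      by (simp only: exp_le_cancel_iff mult_minus_left minus_divide_left neg_le_iff_le)
  qed
  finally show ?thesis .
qed

end

lemma Dconst_ge:
  shows "C2 / C1 \<le> Dconst m C1 C2 C3 A B"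
    and "C3 * sqrt (real m + 1) / sqrt C1 \<le> Dconst m C1 C2 C3 A B"
    and "i \<in> {1..m} \<Longrightarrow> A i / C1 \<le> Dconst m C1 C2 C3 A B"
    and "i \<in> {1..m} \<Longrightarrow> sqrt (real m + 1) * B i / sqrt C1 \<le> Dconst m C1 C2 C3 A B"
  unfolding Dconst_def by (rule Max_ge, simp, blast)+

lemma Dconst_pos: "0 < C1 \<Longrightarrow> 0 < C2 \<Longrightarrow> 0 < Dconst m C1 C2 C3 A B"
  using Dconst_ge(1)[of C2 C1 m C3 A B] by (smt (verit) divide_pos_pos)

lemma drift_bound_le:
  fixes A a b :: "nat \<Rightarrow> real"
  assumes "0 < C1" "0 < \<eta>" "0 \<le> x" "x \<le> r" "C2 / C1 \<le> D" "\<And>i. i \<in> {1..m} \<Longrightarrow> A i / C1 \<le> D"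
    and nonneg: "\<And>i. i \<in> {1..m} \<Longrightarrow> 0 \<le> A i \<and> 0 \<le> b i"
  shows "C2 * \<eta>\<^sup>2 + (\<Sum>i=1..m. A i * \<eta> powr (1 + a i) * x powr b i)
           \<le> C1 * \<eta> * D * (\<eta> + (\<Sum>i=1..m. \<eta> powr a i * r powr b i))"
proof -
  have "C2 * \<eta>\<^sup>2 \<le> C1 * \<eta> * D * \<eta>"
    using assms(1,2,5) by (simp add: power2_eq_square pos_divide_le_eq mult.commute mult_right_mono)
  moreover have "A i * \<eta> powr (1 + a i) * x powr b i \<le> C1 * \<eta> * D * (\<eta> powr a i * r powr b i)"
    if i: "i \<in> {1..m}" for i
  proof -
    have "A i \<le> C1 * D"
      using assms(1) assms(6)[OF i] by (simp add: pos_divide_le_eq mult.commute)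
    moreover have "x powr b i \<le> r powr b i"
      using nonneg[OF i] assms(3,4) by (intro powr_mono2) auto
    ultimately have "A i * (\<eta> * (\<eta> powr a i * x powr b i)) \<le> C1 * D * (\<eta> * (\<eta> powr a i * r powr b i))"
      using nonneg[OF i] assms(2) by (intro mult_mono) auto
    then show ?thesis
      using assms(2) by (simp add: powr_add mult_ac)
  qed
  ultimately show ?thesis
    unfolding distrib_left sum_distrib_left by (intro add_mono sum_mono) auto
qed

lemma increment_bound_le:
  fixes B c d :: "nat \<Rightarrow> real"
  assumes "0 < C1" "0 < \<eta>" "0 \<le> x" "x \<le> r" "0 \<le> C3" "C3 * sqrt (real m + 1) / sqrt C1 \<le> D"
    "\<And>i. i \<in> {1..m} \<Longrightarrow> sqrt (real m + 1) * B i / sqrt C1 \<le> D"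
    and nonneg: "\<And>i. i \<in> {1..m} \<Longrightarrow> 0 \<le> B i \<and> 0 \<le> d i"
  shows "C3 * \<eta> * sqrt x + (\<Sum>i=1..m. B i * \<eta> powr (1/2 + c i) * x powr d i)
           \<le> sqrt (C1 * \<eta>) * D * (sqrt (\<eta> * r) + (\<Sum>i=1..m. \<eta> powr c i * r powr d i))"
proof -
  have le_sqrt_C1_D: "y \<le> sqrt C1 * D" if "0 \<le> y" "sqrt (real m + 1) * y / sqrt C1 \<le> D" for y
  proof -
    have "y \<le> sqrt (real m + 1) * y"
      using that(1) by (simp add: mult_le_cancel_right1)
    with that(2) assms(1) show ?thesis
      by (simp add: pos_divide_le_eq mult.commute)
  qed
  have "C3 * \<eta> * sqrt x \<le> sqrt (C1 * \<eta>) * D * sqrt (\<eta> * r)"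
  proof -
    have "C3 \<le> sqrt C1 * D"
      using le_sqrt_C1_D[OF assms(5)] assms(6) by (simp add: mult.commute)
    then have "C3 * (\<eta> * sqrt x) \<le> sqrt C1 * D * (\<eta> * sqrt r)"
      using assms(2-5) by (intro mult_mono) auto
    also have "\<dots> = sqrt C1 * D * (sqrt \<eta> * sqrt \<eta>) * sqrt r"
      using assms(2) by simp
    also have "\<dots> = sqrt (C1 * \<eta>) * D * sqrt (\<eta> * r)"
      by (simp add: real_sqrt_mult mult_ac)
    finally show ?thesis
      by (simp add: mult_ac)
  qed
  moreover have "B i * \<eta> powr (1/2 + c i) * x powr d i \<le> sqrt (C1 * \<eta>) * D * (\<eta> powr c i * r powr d i)"
    if i: "i \<in> {1..m}" for i
  proof -
    have "B i \<le> sqrt C1 * D"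
      using le_sqrt_C1_D nonneg[OF i] assms(7)[OF i] by simp
    moreover have "x powr d i \<le> r powr d i"
      using nonneg[OF i] assms(3,4) by (intro powr_mono2) auto
    ultimately have "B i * (sqrt \<eta> * (\<eta> powr c i * x powr d i)) \<le> sqrt C1 * D * (sqrt \<eta> * (\<eta> powr c i * r powr d i))"
      using nonneg[OF i] assms(2) by (intro mult_mono) auto
    then show ?thesis
      using assms(2) by (simp add: powr_add powr_half_sqrt real_sqrt_mult mult_ac)
  qed
  ultimately show ?thesis
    unfolding distrib_left sum_distrib_left by (intro add_mono sum_mono) auto
qed

lemma AE_drift_le_below_threshold:
  fixes x y :: "'a \<Rightarrow> real" and A a b :: "nat \<Rightarrow> real"
  assumes "0 < C1" "0 < \<eta>" "\<Theta> \<le> r" "AE \<omega> in M. 0 \<le> x \<omega>"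
    and "AE \<omega> in M. \<bar>y \<omega>\<bar> \<le> C2 * \<eta>\<^sup>2 + (\<Sum>i=1..m. A i * \<eta> powr (1 + a i) * x \<omega> powr b i)"
    and consts_nonneg: "\<And>i. i \<in> {1..m} \<Longrightarrow> 0 \<le> A i \<and> 0 \<le> b i"
  shows "AE \<omega> in M. x \<omega> \<le> \<Theta> \<longrightarrow>
           y \<omega> \<le> C1 * \<eta> * Dconst m C1 C2 C3 A B * (\<eta> + (\<Sum>i=1..m. \<eta> powr a i * r powr b i))"
  using assms(4,5)
proof (eventually_elim, intro impI)
  case (elim \<omega>)
  assume "x \<omega> \<le> \<Theta>"
  with elim(1) \<open>\<Theta> \<le> r\<close> have "0 \<le> x \<omega>" "x \<omega> \<le> r"
    by auto
  with assms(1,2) have "C2 * \<eta>\<^sup>2 + (\<Sum>i=1..m. A i * \<eta> powr (1 + a i) * x \<omega> powr b i)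
      \<le> C1 * \<eta> * Dconst m C1 C2 C3 A B * (\<eta> + (\<Sum>i=1..m. \<eta> powr a i * r powr b i))"
    using Dconst_ge(1,3) by (rule drift_bound_le) (use consts_nonneg in auto)
  with elim(2) show "y \<omega> \<le> C1 * \<eta> * Dconst m C1 C2 C3 A B * (\<eta> + (\<Sum>i=1..m. \<eta> powr a i * r powr b i))"
    by linarith
qed

lemma AE_increment_le_below_threshold:
  fixes x y :: "'a \<Rightarrow> real" and B c d :: "nat \<Rightarrow> real"
  assumes "0 < C1" "0 < \<eta>" "0 \<le> C3" "\<Theta> \<le> r" "AE \<omega> in M. 0 \<le> x \<omega>"
    and "AE \<omega> in M. \<bar>y \<omega>\<bar> \<le>
      C3 * \<eta> * sqrt (x \<omega>) + (\<Sum>i=1..m. B i * \<eta> powr (1/2 + c i) * x \<omega> powr d i)"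
    and consts_nonneg: "\<And>i. i \<in> {1..m} \<Longrightarrow> 0 \<le> B i \<and> 0 \<le> d i"
  shows "AE \<omega> in M. x \<omega> \<le> \<Theta> \<longrightarrow> \<bar>y \<omega>\<bar> \<le>
           sqrt (C1 * \<eta>) * Dconst m C1 C2 C3 A B * (sqrt (\<eta> * r) + (\<Sum>i=1..m. \<eta> powr c i * r powr d i))"
  using assms(5,6)
proof (eventually_elim, intro impI)
  case (elim \<omega>)
  assume "x \<omega> \<le> \<Theta>"
  with elim(1) \<open>\<Theta> \<le> r\<close> have "0 \<le> x \<omega>" "x \<omega> \<le> r"
    by auto
  with assms(1,2) have "C3 * \<eta> * sqrt (x \<omega>) + (\<Sum>i=1..m. B i * \<eta> powr (1/2 + c i) * x \<omega> powr d i)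
      \<le> sqrt (C1 * \<eta>) * Dconst m C1 C2 C3 A B * (sqrt (\<eta> * r) + (\<Sum>i=1..m. \<eta> powr c i * r powr d i))"
    using assms(3) Dconst_ge(2,4) by (rule increment_bound_le) (use consts_nonneg in auto)
  with elim(2) show "\<bar>y \<omega>\<bar> \<le>
      sqrt (C1 * \<eta>) * Dconst m C1 C2 C3 A B * (sqrt (\<eta> * r) + (\<Sum>i=1..m. \<eta> powr c i * r powr d i))"
    by linarith
qed

lemma (in filtered_prob_space) power_bounds_contracting_recursion:
  fixes X U :: "nat \<Rightarrow> 'a \<Rightarrow> real" and A B a b c d :: "nat \<Rightarrow> real"
  assumes C_pos: "0 < C1" "0 < C2" "0 < C3" and "0 < \<eta>" "C1 * \<eta> < 1" "0 < r" "0 \<le> \<Theta>" "\<Theta> \<le> r"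
    and consts_nonneg: "\<And>i. i \<in> {1..m} \<Longrightarrow> 0 \<le> A i \<and> 0 \<le> B i \<and> 0 \<le> b i \<and> 0 \<le> d i"
    and X_adapted: "\<And>t. t \<le> n \<Longrightarrow> X t \<in> borel_measurable (F t)"
    and U_adapted: "\<And>t. t \<in> {1..n} \<Longrightarrow> U t \<in> borel_measurable (F t)"
    and U_int: "\<And>t. t \<in> {1..n} \<Longrightarrow> integrable M (U t)"
    and X_nonneg: "\<And>t. t \<le> n \<Longrightarrow> AE \<omega> in M. X t \<omega> \<ge> 0"
    and rec: "\<And>t. t \<in> {1..n} \<Longrightarrow>
      AE \<omega> in M. X t \<omega> \<le> (1 - C1 * \<eta>) * X (t - 1) \<omega> + U t \<omega>"
    and drift: "\<And>t. t \<in> {1..n} \<Longrightarrow>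
      AE \<omega> in M. \<bar>real_cond_exp M (F (t - 1)) (U t) \<omega>\<bar> \<le>
        C2 * \<eta>\<^sup>2 + (\<Sum>i=1..m. A i * \<eta> powr (1 + a i) * X (t - 1) \<omega> powr b i)"
    and bound: "\<And>t. t \<in> {1..n} \<Longrightarrow>
      AE \<omega> in M. \<bar>U t \<omega>\<bar> \<le>
        C3 * \<eta> * sqrt (X (t - 1) \<omega>) + (\<Sum>i=1..m. B i * \<eta> powr (1/2 + c i) * X (t - 1) \<omega> powr d i)"
  shows "contracting_recursion M F X U n (1 - C1 * \<eta>) \<Theta>
           (C1 * \<eta> * Dconst m C1 C2 C3 A B * (\<eta> + (\<Sum>i=1..m. \<eta> powr a i * r powr b i)))
           (sqrt (C1 * \<eta>) * Dconst m C1 C2 C3 A B * (sqrt (\<eta> * r) + (\<Sum>i=1..m. \<eta> powr c i * r powr d i)))"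
proof -
  have X_prev_nonneg: "AE \<omega> in M. 0 \<le> X (s - 1) \<omega>" if "s \<in> {1..n}" for s
    using that by (intro X_nonneg) auto
  have "AE \<omega> in M. X (s - 1) \<omega> \<le> \<Theta> \<longrightarrow> real_cond_exp M (F (s - 1)) (U s) \<omega> \<le>
      C1 * \<eta> * Dconst m C1 C2 C3 A B * (\<eta> + (\<Sum>i=1..m. \<eta> powr a i * r powr b i))"
    if "s \<in> {1..n}" for s
    using C_pos(1) \<open>0 < \<eta>\<close> \<open>\<Theta> \<le> r\<close> X_prev_nonneg[OF that] drift[OF that]
    by (rule AE_drift_le_below_threshold) (use consts_nonneg in auto)
  moreover have "AE \<omega> in M. X (s - 1) \<omega> \<le> \<Theta> \<longrightarrow> \<bar>U s \<omega>\<bar> \<le>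
      sqrt (C1 * \<eta>) * Dconst m C1 C2 C3 A B * (sqrt (\<eta> * r) + (\<Sum>i=1..m. \<eta> powr c i * r powr d i))"
    if "s \<in> {1..n}" for s
    using C_pos(1) \<open>0 < \<eta>\<close> less_imp_le[OF C_pos(3)] \<open>\<Theta> \<le> r\<close> X_prev_nonneg[OF that] bound[OF that]
    by (rule AE_increment_le_below_threshold) (use consts_nonneg in auto)
  moreover have "0 < Dconst m C1 C2 C3 A B"
    using C_pos(1,2) by (rule Dconst_pos)
  moreover have "0 < sqrt (\<eta> * r) + (\<Sum>i=1..m. \<eta> powr c i * r powr d i)"
    "0 \<le> \<eta> + (\<Sum>i=1..m. \<eta> powr a i * r powr b i)"
    using \<open>0 < \<eta>\<close> \<open>0 < r\<close> by (auto intro!: add_pos_nonneg add_nonneg_nonneg sum_nonneg)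
  ultimately show ?thesis
    using assms(4-5,7) C_pos X_adapted U_adapted U_int rec by unfold_locales auto
qed

theorem lemma4:
  fixes M :: "'a measure" and F :: "nat \<Rightarrow> 'a measure"
    and X U :: "nat \<Rightarrow> 'a \<Rightarrow> real"
    and n m :: nat and \<eta> C1 C2 C3 :: real
    and A B a b c d :: "nat \<Rightarrow> real"
    and r \<delta> \<epsilon>0 :: real and E :: "'a set"
  assumes prob: "prob_space M"
    and filt_sub: "\<And>t. subalgebra M (F t)"
    and filt_mono: "\<And>s t. s \<le> t \<Longrightarrow> sets (F s) \<subseteq> sets (F t)"
    and n_ge: "n \<ge> 1"
    and eta_pos: "\<eta> > 0" and C1eta: "C1 * \<eta> < 1"
    and C_pos: "C1 > 0" "C2 > 0" "C3 > 0"
    and consts_pos: "\<And>i. i \<in> {1..m} \<Longrightarrow>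
         A i > 0 \<and> B i > 0 \<and> a i > 0 \<and> b i > 0 \<and> c i > 0 \<and> d i > 0"
    and X_adapted: "\<And>t. t \<le> n \<Longrightarrow> X t \<in> borel_measurable (F t)"
    and U_adapted: "\<And>t. t \<in> {1..n} \<Longrightarrow> U t \<in> borel_measurable (F t)"
    and U_int: "\<And>t. t \<in> {1..n} \<Longrightarrow> integrable M (U t)"
    and X_nonneg: "\<And>t. t \<le> n \<Longrightarrow> AE \<omega> in M. X t \<omega> \<ge> 0"
    and rec: "\<And>t. t \<in> {1..n} \<Longrightarrow>
         AE \<omega> in M. X t \<omega> \<le> (1 - C1 * \<eta>) * X (t - 1) \<omega> + U t \<omega>"
    and drift: "\<And>t. t \<in> {1..n} \<Longrightarrow>
         AE \<omega> in M. \<bar>real_cond_exp M (F (t - 1)) (U t) \<omega>\<bar> \<le>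
            C2 * \<eta>\<^sup>2 + (\<Sum>i=1..m. A i * \<eta> powr (1 + a i) * X (t - 1) \<omega> powr b i)"
    and bound: "\<And>t. t \<in> {1..n} \<Longrightarrow>
         AE \<omega> in M. \<bar>U t \<omega>\<bar> \<le>
            C3 * \<eta> * sqrt (X (t - 1) \<omega>) + (\<Sum>i=1..m. B i * \<eta> powr (1/2 + c i) * X (t - 1) \<omega> powr d i)"
    and r_in: "0 < r" "r < 1" and delta_in: "0 < \<delta>" "\<delta> < 1"
    and eps_pos: "\<epsilon>0 > 0"
    and eps_r: "\<epsilon>0 + Ddelta n m C1 C2 C3 \<eta> A B a b c d \<delta> r \<le> r"
    and E_meas: "E \<in> sets (F 0)"
    and E_sub: "E \<subseteq> {\<omega> \<in> space M. X 0 \<omega> \<le> \<epsilon>0}"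
    and E_pos: "measure M E > 0"
  shows "measure M ({\<omega> \<in> space M. \<exists>t\<in>{1..n}.
            X t \<omega> \<ge> (1 - C1 * \<eta>) ^ t * (\<epsilon>0 + Ddelta n m C1 C2 C3 \<eta> A B a b c d \<delta> r)} \<inter> E)
         \<le> \<delta>"
proof -
  interpret filtered_prob_space M F
    using prob filt_sub filt_mono by (simp add: filtered_prob_space_def filtered_prob_space_axioms_def)
  define q where "q = 1 - C1 * \<eta>"
  define D where "D = Dconst m C1 C2 C3 A B"
  define L where "L = ln (1 / \<delta>)"
  define S where "S = sqrt (\<eta> * r) + (\<Sum>i=1..m. \<eta> powr c i * r powr d i)"
  define T where "T = \<eta> + (\<Sum>i=1..m. \<eta> powr a i * r powr b i)"
  define \<Theta> where "\<Theta> = \<epsilon>0 + Ddelta n m C1 C2 C3 \<eta> A B a b c d \<delta> r"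
  define h where "h = 8 * D * sqrt L * S / q ^ n"
  have q_bounds: "0 < q" "q < 1" and one_minus_q: "1 - q = C1 * \<eta>"
    using C1eta C_pos eta_pos by (auto simp: q_def)
  have "0 < D"
    unfolding D_def using C_pos(1,2) by (rule Dconst_pos)
  have "0 < L"
    using delta_in by (simp add: L_def)
  have "0 < S" "0 \<le> T"
    using eta_pos r_in by (auto simp: S_def T_def intro!: add_pos_nonneg add_nonneg_nonneg sum_nonneg)
  have Ddelta_eq: "Ddelta n m C1 C2 C3 \<eta> A B a b c d \<delta> r = h + 8 * D * T / q ^ n"
    unfolding Ddelta_def h_def D_def[symmetric] L_def[symmetric] S_def[symmetric] q_def[symmetric]
    using q_bounds by (simp add: T_def field_simps)
  have "0 < h" "0 \<le> 8 * D * T / q ^ n"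
    using \<open>0 < D\<close> \<open>0 < L\<close> \<open>0 < S\<close> \<open>0 \<le> T\<close> q_bounds by (simp_all add: h_def)
  then have "\<Theta> \<le> r" "\<epsilon>0 < \<Theta>" "0 \<le> \<Theta>"
    using eps_r eps_pos by (auto simp: \<Theta>_def Ddelta_eq)
  interpret contracting_recursion M F X U n q \<Theta> "C1 * \<eta> * D * T" "sqrt (C1 * \<eta>) * D * S"
    unfolding q_def D_def S_def T_def
    by (rule power_bounds_contracting_recursion[OF C_pos eta_pos C1eta r_in(1) \<open>0 \<le> \<Theta>\<close> \<open>\<Theta> \<le> r\<close> _
          X_adapted U_adapted U_int X_nonneg rec drift bound])
       (use consts_pos in force)
  have "h \<le> \<Theta> - \<epsilon>0 - C1 * \<eta> * D * T / (q ^ n * (1 - q))"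
    using q_bounds \<open>0 < D\<close> \<open>0 \<le> T\<close> C_pos eta_pos by (simp add: \<Theta>_def Ddelta_eq one_minus_q)
  then have "measure M ({\<omega> \<in> space M. \<exists>s\<in>{1..n}. q ^ s * \<Theta> \<le> X s \<omega>} \<inter> E)
      \<le> exp (- (1 - q) * (q ^ n * h)\<^sup>2 / (8 * (sqrt (C1 * \<eta>) * D * S)\<^sup>2))"
    using n_ge \<open>\<epsilon>0 < \<Theta>\<close> \<open>0 < h\<close> E_sub by (intro exit_prob_le) auto
  also have "\<dots> = exp (- 8 * L)"
    unfolding one_minus_q using q_bounds \<open>0 < D\<close> \<open>0 < S\<close> \<open>0 < L\<close> C_pos eta_pos
    by (simp add: h_def power_mult_distrib power_divide field_simps)
  also have "\<dots> \<le> exp (- L)"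
    using \<open>0 < L\<close> by simp
  also have "\<dots> = \<delta>"
    using delta_in by (simp add: L_def ln_div)
  finally show ?thesis
    by (simp add: q_def \<Theta>_def)
qed

end
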